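(* Let $Z=(A,U)$ be the decision task with $A=[0,1]$ and $U(a,y)=1-(a-y)^2$. There exists an absolute constant $c>0$ such that for every $\varepsilon\in(0,10^{-100})$ and every randomized response function $r:[0,1]\to\Delta([0,1])$, there exists a distribution $\mathcal D$ on $[0,1]\times\{0,1\}$ with $\mathsf{Cutoff}(\mathcal D)=\varepsilon$ and $\mathsf{SR}_Z(r,\mathcal D)\ge c\,\varepsilon^{2/3}$.
   Context: For a distribution $\mathcal D$ of $(p,y)\in[0,1]\times\{0,1\}$, the cutoff calibration error is $\mathsf{Cutoff}(\mathcal D)=\sup_{0\le a\le b\le1}\big|\mathbb E_{(p,y)\sim\mathcal D}[(y-p)\mathbb I[a\le p\le b]]\big|$. For a randomized response function $r:[0,1]\to\Delta(A)$, the swap regret is $\mathsf{SR}_Z(r,\mathcal D)=\sup_{\sigma:A\to A}\mathbb E_{(p,y)\sim\mathcal D,\,a\sim r(p)}[U(\sigma(a),y)-U(a,y)]$. *)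

theory Defs
  imports "HOL-Probability.Probability"
begin

definition sqU :: "real \<Rightarrow> bool \<Rightarrow> real" where
  "sqU a y = 1 - (a - of_bool y)^2"

text \<open>A distribution on [0,1] x {0,1} (discrete, given as a pmf; bool encodes {0,1}).\<close>
definition valid_dist :: "(real \<times> bool) pmf \<Rightarrow> bool" where
  "valid_dist D \<longleftrightarrow> set_pmf D \<subseteq> {0..1} \<times> UNIV"

definition cutoff_err :: "(real \<times> bool) pmf \<Rightarrow> real" where
  "cutoff_err D = Sup {\<bar>measure_pmf.expectation D
        (\<lambda>(p,y). (of_bool y - p) * of_bool (a \<le> p \<and> p \<le> b))\<bar> | a b.
        0 \<le> a \<and> a \<le> b \<and> b \<le> (1::real)}"

definition valid_response :: "(real \<Rightarrow> real measure) \<Rightarrow> bool" where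
  "valid_response r \<longleftrightarrow> (\<forall>p\<in>{0..1}. prob_space (r p) \<and> sets (r p) = sets borel
      \<and> measure (r p) {0..1} = 1)"

definition swap_regret ::
  "(real \<Rightarrow> bool \<Rightarrow> real) \<Rightarrow> (real \<Rightarrow> real measure) \<Rightarrow> (real \<times> bool) pmf \<Rightarrow> real" where
  "swap_regret U r D = Sup {measure_pmf.expectation D
        (\<lambda>(p,y). \<integral>a. (U (\<sigma> a) y - U a y) \<partial>(r p)) | \<sigma>.
        \<sigma> \<in> borel_measurable borel \<and> (\<forall>a\<in>{0..1}. \<sigma> a \<in> {0..1})}"

end

(*
  Write t = \<epsilon>^(1/3). If some forecast p is answered with mean square spread
  E_{a ~ r(p)} (a - p)^2 >= t^2/10^4, take the distribution that forecasts p
  calibrated with probability 1 - \<epsilon> and puts an atom (1, False) of mass \<epsilon>: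
  its cutoff error is exactly \<epsilon>, and the constant swap to p gains the spread.

  Otherwise every response stays close to its forecast. Then put n ~ 1/t
  forecasts x_i on a grid of mesh h = 1/(2n) in [1/4, 3/4], with outcome means
  x_i +- 1/4 of alternating sign, of total mass w = 4 t^3 n, and the remaining
  mass on the calibrated atom (0, False). The alternating signs cancel over
  every interval, so the cutoff error is w/(4n) = t^3; but the swap sending the
  grid cell of x_i to the mean x_i +- 1/4 gains about 1/32 at each grid point,
  so the swap regret is of order w ~ t^2 = \<epsilon>^(2/3).
*)
theory Submission
  imports Defs
begin

definition forecast_mixture ::
  "real \<Rightarrow> nat \<Rightarrow> (nat \<Rightarrow> real) \<Rightarrow> (nat \<Rightarrow> real) \<Rightarrow> real \<times> bool \<Rightarrow> (real \<times> bool) pmf" where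
  "forecast_mixture w n p \<mu> z = bernoulli_pmf w \<bind> (\<lambda>b. if b
      then pmf_of_set {..<n} \<bind> (\<lambda>i. map_pmf (Pair (p i)) (bernoulli_pmf (\<mu> i)))
      else return_pmf z)"

lemma valid_dist_forecast_mixture:
  assumes "0 < n" "\<And>i. i < n \<Longrightarrow> p i \<in> {0..1}" "fst z \<in> {0..1}"
  shows "valid_dist (forecast_mixture w n p \<mu> z)"
  using assms unfolding valid_dist_def forecast_mixture_def
  by (auto simp: set_pmf_of_set lessThan_empty_iff split: if_splits)

lemma expectation_forecast_mixture:
  fixes f :: "real \<times> bool \<Rightarrow> real"
  assumes "0 < n" "w \<in> {0..1}" "\<And>i. i < n \<Longrightarrow> \<mu> i \<in> {0..1}"
  shows "measure_pmf.expectation (forecast_mixture w n p \<mu> z) f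
     = w * (\<Sum>i<n. \<mu> i * f (p i, True) + (1 - \<mu> i) * f (p i, False)) / n + (1 - w) * f z"
proof -
  let ?labelled = "pmf_of_set {..<n} \<bind> (\<lambda>i. map_pmf (Pair (p i)) (bernoulli_pmf (\<mu> i)))"
  have "measure_pmf.expectation ?labelled f
      = (\<Sum>i<n. \<mu> i * f (p i, True) + (1 - \<mu> i) * f (p i, False)) / n"
    using assms by (subst pmf_expectation_bind_pmf_of_set)
      (auto simp: divide_inverse_commute sum_distrib_left mult_ac)
  moreover have "finite (set_pmf ?labelled)"
    using assms(1) by (auto simp: set_pmf_of_set lessThan_empty_iff)
  ultimately show ?thesis
    using assms(2) unfolding forecast_mixture_def
    by (subst pmf_expectation_bind[of UNIV]) (auto simp: UNIV_bool)
qed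

lemma sqU_diff: "sqU s y - sqU a y = (a - of_bool y)\<^sup>2 - (s - of_bool y)\<^sup>2"
  by (simp add: sqU_def)

lemma abs_diff_squares_le_1:
  fixes a s \<mu> :: real
  assumes "a \<in> {0..1}" "s \<in> {0..1}" "\<mu> \<in> {0..1}"
  shows "\<bar>(a - \<mu>)\<^sup>2 - (s - \<mu>)\<^sup>2\<bar> \<le> 1"
proof -
  have "(a - \<mu>)\<^sup>2 \<le> 1" "(s - \<mu>)\<^sup>2 \<le> 1"
    using assms by (auto simp: abs_square_le_1)
  then show ?thesis
    unfolding abs_le_iff using zero_le_power2[of "a - \<mu>"] zero_le_power2[of "s - \<mu>"] by linarith
qed

lemma prob_space_valid_response: "valid_response r \<Longrightarrow> p \<in> {0..1} \<Longrightarrow> prob_space (r p)"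
  by (simp add: valid_response_def)

lemma AE_valid_response:
  assumes "valid_response r" "p \<in> {0..1}"
  shows "AE a in r p. a \<in> {0..1}"
proof -
  interpret prob_space "r p"
    using assms by (rule prob_space_valid_response)
  show ?thesis
    using assms by (intro AE_prob_1) (simp add: valid_response_def)
qed

lemma valid_response_integrable:
  fixes g :: "real \<Rightarrow> real"
  assumes r: "valid_response r" and p: "p \<in> {0..1}" and g: "g \<in> borel_measurable borel"
    and bound: "\<And>a. a \<in> {0..1} \<Longrightarrow> \<bar>g a\<bar> \<le> B"
  shows "integrable (r p) g"
proof -
  interpret prob_space "r p"
    using r p by (rule prob_space_valid_response)
  have "AE a in r p. norm (g a) \<le> B"
    using AE_valid_response[OF r p] by eventually_elim (simp add: bound)
  moreover have "g \<in> borel_measurable (r p)"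
    using r p g by (simp add: valid_response_def cong: measurable_cong_sets)
  ultimately show ?thesis
    by (rule integrable_const_bound)
qed

lemma valid_response_integral_mono:
  fixes f g :: "real \<Rightarrow> real"
  assumes r: "valid_response r" and p: "p \<in> {0..1}"
    and "integrable (r p) f" "integrable (r p) g"
    and le: "\<And>a. a \<in> {0..1} \<Longrightarrow> f a \<le> g a"
  shows "(\<integral>a. f a \<partial>r p) \<le> (\<integral>a. g a \<partial>r p)"
proof (rule integral_mono_AE)
  show "AE a in r p. f a \<le> g a"
    using AE_valid_response[OF r p] by eventually_elim (rule le)
qed (use assms in auto)

lemma valid_response_abs_integral_le:
  fixes g :: "real \<Rightarrow> real"
  assumes r: "valid_response r" and p: "p \<in> {0..1}" and g: "integrable (r p) g"
    and bound: "\<And>a. a \<in> {0..1} \<Longrightarrow> \<bar>g a\<bar> \<le> B"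
  shows "\<bar>\<integral>a. g a \<partial>r p\<bar> \<le> B"
proof -
  interpret prob_space "r p"
    using r p by (rule prob_space_valid_response)
  have bounds: "- B \<le> g a" "g a \<le> B" if "a \<in> {0..1}" for a
    using bound[OF that] by auto
  have "AE a in r p. - B \<le> g a" "AE a in r p. g a \<le> B"
    using AE_valid_response[OF r p] by (eventually_elim, simp add: bounds)+
  then show ?thesis
    using integral_ge_const[OF g] integral_le_const[OF g] unfolding abs_le_iff by fastforce
qed

definition response_spread :: "(real \<Rightarrow> real measure) \<Rightarrow> real \<Rightarrow> real" where
  "response_spread r p = (\<integral>a. (a - p)\<^sup>2 \<partial>r p)"

definition swap_gain :: "(real \<Rightarrow> real measure) \<Rightarrow> (real \<Rightarrow> real) \<Rightarrow> real \<Rightarrow> real \<Rightarrow> real" where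
  "swap_gain r \<sigma> p \<mu> = (\<integral>a. (a - \<mu>)\<^sup>2 - (\<sigma> a - \<mu>)\<^sup>2 \<partial>r p)"

lemma swap_gain_integrable:
  assumes "valid_response r" "p \<in> {0..1}" "\<sigma> \<in> borel_measurable borel"
    "\<And>a. a \<in> {0..1} \<Longrightarrow> \<sigma> a \<in> {0..1}" "\<mu> \<in> {0..1}"
  shows "integrable (r p) (\<lambda>a. (a - \<mu>)\<^sup>2 - (\<sigma> a - \<mu>)\<^sup>2)"
  using assms by (intro valid_response_integrable[where B = 1] abs_diff_squares_le_1) auto

lemma abs_swap_gain_le_1:
  assumes "valid_response r" "p \<in> {0..1}" "\<sigma> \<in> borel_measurable borel"
    "\<And>a. a \<in> {0..1} \<Longrightarrow> \<sigma> a \<in> {0..1}" "\<mu> \<in> {0..1}"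
  shows "\<bar>swap_gain r \<sigma> p \<mu>\<bar> \<le> 1"
  unfolding swap_gain_def using assms
  by (intro valid_response_abs_integral_le swap_gain_integrable abs_diff_squares_le_1) auto

lemma swap_gain_convex_combination:
  assumes "valid_response r" "p \<in> {0..1}" "\<sigma> \<in> borel_measurable borel"
    "\<And>a. a \<in> {0..1} \<Longrightarrow> \<sigma> a \<in> {0..1}"
  shows "\<mu> * swap_gain r \<sigma> p 1 + (1 - \<mu>) * swap_gain r \<sigma> p 0 = swap_gain r \<sigma> p \<mu>"
proof -
  have "\<mu> * swap_gain r \<sigma> p 1 + (1 - \<mu>) * swap_gain r \<sigma> p 0
      = (\<integral>a. \<mu> * ((a - 1)\<^sup>2 - (\<sigma> a - 1)\<^sup>2) + (1 - \<mu>) * ((a - 0)\<^sup>2 - (\<sigma> a - 0)\<^sup>2) \<partial>r p)"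
    unfolding swap_gain_def using swap_gain_integrable[OF assms, of 0] swap_gain_integrable[OF assms, of 1]
    by simp
  also have "\<dots> = swap_gain r \<sigma> p \<mu>"
    unfolding swap_gain_def by (rule Bochner_Integration.integral_cong) (simp_all add: power2_diff algebra_simps)
  finally show ?thesis .
qed

lemma swap_gain_lower_bound:
  assumes r: "valid_response r" and p: "p \<in> {0..1}" and \<sigma>: "\<sigma> \<in> borel_measurable borel"
    "\<And>a. a \<in> {0..1} \<Longrightarrow> \<sigma> a \<in> {0..1}" and \<mu>: "\<mu> \<in> {0..1}"
    and lower: "\<And>a. a \<in> {0..1} \<Longrightarrow> c - K * (a - p)\<^sup>2 \<le> (a - \<mu>)\<^sup>2 - (\<sigma> a - \<mu>)\<^sup>2"
  shows "c - K * response_spread r p \<le> swap_gain r \<sigma> p \<mu>"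
proof -
  interpret prob_space "r p"
    using r p by (rule prob_space_valid_response)
  have "integrable (r p) (\<lambda>a. (a - p)\<^sup>2)"
    using p by (intro valid_response_integrable[OF r p, where B = 1]) (auto simp: abs_square_le_1)
  then have "c - K * response_spread r p = (\<integral>a. c - K * (a - p)\<^sup>2 \<partial>r p)"
    unfolding response_spread_def by (simp add: prob_space)
  also have "\<dots> \<le> swap_gain r \<sigma> p \<mu>"
    unfolding swap_gain_def using \<open>integrable (r p) (\<lambda>a. (a - p)\<^sup>2)\<close>
    by (intro valid_response_integral_mono[OF r p] lower swap_gain_integrable[OF r p \<sigma> \<mu>]) auto
  finally show ?thesis .
qed

lemma swap_gain_le_swap_regret:
  assumes r: "valid_response r" and D: "valid_dist D"
    and \<sigma>: "\<sigma> \<in> borel_measurable borel" "\<And>a. a \<in> {0..1} \<Longrightarrow> \<sigma> a \<in> {0..1}"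
  shows "measure_pmf.expectation D (\<lambda>(p, y). swap_gain r \<sigma> p (of_bool y)) \<le> swap_regret sqU r D"
proof -
  have regret_integrand: "(\<lambda>(p, y). \<integral>a. sqU (\<tau> a) y - sqU a y \<partial>r p)
      = (\<lambda>(p, y). swap_gain r \<tau> p (of_bool y))" for \<tau>
    by (simp add: swap_gain_def sqU_diff)
  have "measure_pmf.expectation D (\<lambda>(p, y). swap_gain r \<tau> p (of_bool y)) \<le> 1"
    if "\<tau> \<in> borel_measurable borel" "\<And>a. a \<in> {0..1} \<Longrightarrow> \<tau> a \<in> {0..1}" for \<tau>
  proof -
    have "AE x in D. \<bar>(\<lambda>(p, y). swap_gain r \<tau> p (of_bool y)) x\<bar> \<le> 1"
      using D r that by (intro AE_pmfI) (auto simp: valid_dist_def intro!: abs_swap_gain_le_1)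
    then show ?thesis
      by (intro measure_pmf.integral_le_const measure_pmf.integrable_const_bound[where B = 1])
        (auto elim!: eventually_mono)
  qed
  then have "bdd_above {measure_pmf.expectation D (\<lambda>(p, y). \<integral>a. sqU (\<tau> a) y - sqU a y \<partial>r p) | \<tau>.
      \<tau> \<in> borel_measurable borel \<and> (\<forall>a\<in>{0..1}. \<tau> a \<in> {0..1})}"
    unfolding regret_integrand by (intro bdd_aboveI[where M = 1]) auto
  then show ?thesis
    unfolding swap_regret_def using \<sigma> by (intro cSup_upper) (auto simp: regret_integrand)
qed

lemma swap_regret_forecast_mixture_ge:
  assumes r: "valid_response r" and n: "0 < n" and w: "w \<in> {0..1}"
    and p: "\<And>i. i < n \<Longrightarrow> p i \<in> {0..1}" and \<mu>: "\<And>i. i < n \<Longrightarrow> \<mu> i \<in> {0..1}"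
    and z: "fst z \<in> {0..1}"
    and \<sigma>: "\<sigma> \<in> borel_measurable borel" "\<And>a. a \<in> {0..1} \<Longrightarrow> \<sigma> a \<in> {0..1}"
  shows "w * (\<Sum>i<n. swap_gain r \<sigma> (p i) (\<mu> i)) / n
      + (1 - w) * swap_gain r \<sigma> (fst z) (of_bool (snd z))
    \<le> swap_regret sqU r (forecast_mixture w n p \<mu> z)"
proof -
  have "(\<Sum>i<n. swap_gain r \<sigma> (p i) (\<mu> i))
      = (\<Sum>i<n. \<mu> i * swap_gain r \<sigma> (p i) 1 + (1 - \<mu> i) * swap_gain r \<sigma> (p i) 0)"
    using swap_gain_convex_combination[OF r p \<sigma>] by simp
  then have "w * (\<Sum>i<n. swap_gain r \<sigma> (p i) (\<mu> i)) / n
      + (1 - w) * swap_gain r \<sigma> (fst z) (of_bool (snd z))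
    = measure_pmf.expectation (forecast_mixture w n p \<mu> z) (\<lambda>(p, y). swap_gain r \<sigma> p (of_bool y))"
    by (simp add: expectation_forecast_mixture[OF n w \<mu>] case_prod_beta)
  also have "\<dots> \<le> swap_regret sqU r (forecast_mixture w n p \<mu> z)"
    by (intro swap_gain_le_swap_regret valid_dist_forecast_mixture r n p z \<sigma>)
  finally show ?thesis .
qed

lemma calibration_forecast_mixture:
  assumes "0 < n" "w \<in> {0..1}" "\<And>i. i < n \<Longrightarrow> \<mu> i \<in> {0..1}"
  shows "measure_pmf.expectation (forecast_mixture w n p \<mu> z)
      (\<lambda>(x, y). (of_bool y - x) * of_bool (a \<le> x \<and> x \<le> b))
    = w * (\<Sum>i<n. (\<mu> i - p i) * of_bool (a \<le> p i \<and> p i \<le> b)) / n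
      + (1 - w) * (of_bool (snd z) - fst z) * of_bool (a \<le> fst z \<and> fst z \<le> b)"
  by (simp add: expectation_forecast_mixture[OF assms] case_prod_beta algebra_simps)

lemma cutoff_err_eqI:
  assumes le: "\<And>a b. 0 \<le> a \<Longrightarrow> a \<le> b \<Longrightarrow> b \<le> 1 \<Longrightarrow>
      \<bar>measure_pmf.expectation D (\<lambda>(p, y). (of_bool y - p) * of_bool (a \<le> p \<and> p \<le> b))\<bar> \<le> e"
    and attained: "0 \<le> a\<^sub>0" "a\<^sub>0 \<le> b\<^sub>0" "b\<^sub>0 \<le> 1"
      "\<bar>measure_pmf.expectation D (\<lambda>(p, y). (of_bool y - p) * of_bool (a\<^sub>0 \<le> p \<and> p \<le> b\<^sub>0))\<bar> = e"
  shows "cutoff_err D = e"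
  unfolding cutoff_err_def
proof (rule cSup_eq_maximum)
  show "e \<in> {\<bar>measure_pmf.expectation D (\<lambda>(p, y). (of_bool y - p) * of_bool (a \<le> p \<and> p \<le> b))\<bar> | a b.
      0 \<le> a \<and> a \<le> b \<and> b \<le> (1::real)}"
    using attained by blast
qed (use le in blast)

lemma exists_dist_swap_regret_ge_spread:
  assumes r: "valid_response r" and \<epsilon>: "0 < \<epsilon>" "\<epsilon> \<le> 1" and p: "p \<in> {0..1}"
  shows "\<exists>D. valid_dist D \<and> cutoff_err D = \<epsilon> \<and>
    (1 - \<epsilon>) * response_spread r p - \<epsilon> \<le> swap_regret sqU r D"
proof (intro exI conjI)
  let ?D = "forecast_mixture (1 - \<epsilon>) 1 (\<lambda>_. p) (\<lambda>_. p) (1, False)"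
  have w: "1 - \<epsilon> \<in> {0..1}" using \<epsilon> by simp
  show "valid_dist ?D"
    using p by (intro valid_dist_forecast_mixture) auto
  have calibration: "measure_pmf.expectation ?D (\<lambda>(x, y). (of_bool y - x) * of_bool (a \<le> x \<and> x \<le> b))
      = - \<epsilon> * of_bool (a \<le> 1 \<and> 1 \<le> b)" for a b
    using p by (subst calibration_forecast_mixture[OF _ w]) auto
  show "cutoff_err ?D = \<epsilon>"
    using \<epsilon> by (intro cutoff_err_eqI[where a\<^sub>0 = 1 and b\<^sub>0 = 1]) (unfold calibration, auto)
  have "swap_gain r (\<lambda>_. p) p p = response_spread r p"
    by (simp add: swap_gain_def response_spread_def)
  then have "(1 - \<epsilon>) * response_spread r p + \<epsilon> * swap_gain r (\<lambda>_. p) 1 0 \<le> swap_regret sqU r ?D"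
    using swap_regret_forecast_mixture_ge[of r 1 "1 - \<epsilon>" "\<lambda>_. p" "\<lambda>_. p" "(1, False)" "\<lambda>_. p"] r w p
    by simp
  moreover have "- 1 \<le> swap_gain r (\<lambda>_. p) 1 0"
    using abs_swap_gain_le_1[of r 1 "\<lambda>_. p" 0] r p by simp
  then have "\<epsilon> * (- 1) \<le> \<epsilon> * swap_gain r (\<lambda>_. p) 1 0"
    using \<epsilon> by (intro mult_left_mono) auto
  ultimately show "(1 - \<epsilon>) * response_spread r p - \<epsilon> \<le> swap_regret sqU r ?D"
    by linarith
qed

lemma sum_alternating_lessThan: "(\<Sum>i<k. (-1::real) ^ i) = of_bool (odd k)"
  by (induction k) auto

lemma abs_sum_alternating_order_convex:
  fixes S :: "nat set"
  assumes fin: "finite S" and convex: "\<And>i j k. i \<in> S \<Longrightarrow> k \<in> S \<Longrightarrow> i \<le> j \<Longrightarrow> j \<le> k \<Longrightarrow> j \<in> S"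
  shows "\<bar>\<Sum>i\<in>S. (-1::real) ^ i\<bar> \<le> 1"
proof (cases "S = {}")
  case False
  then have "Min S \<in> S" "Max S \<in> S" "Min S \<le> Max S"
    using fin by auto
  have "S = {Min S..<Suc (Max S)}"
  proof
    show "S \<subseteq> {Min S..<Suc (Max S)}"
      using fin by (auto simp: less_Suc_eq_le)
    show "{Min S..<Suc (Max S)} \<subseteq> S"
      using convex[OF \<open>Min S \<in> S\<close> \<open>Max S \<in> S\<close>] by (auto simp: less_Suc_eq_le)
  qed
  then have "(\<Sum>i\<in>S. (-1::real) ^ i) = (\<Sum>i<Suc (Max S). (-1) ^ i) - (\<Sum>i<Min S. (-1) ^ i)"
    using sum_diff_nat_ivl[of 0 "Min S" "Suc (Max S)" "\<lambda>i. (-1::real) ^ i"] \<open>Min S \<le> Max S\<close>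
    by (simp add: atLeast0LessThan)
  then show ?thesis
    by (simp add: sum_alternating_lessThan)
qed simp

lemma abs_sum_alternating_window:
  fixes x :: "nat \<Rightarrow> real"
  assumes "mono x"
  shows "\<bar>\<Sum>i<n. (-1::real) ^ i * of_bool (a \<le> x i \<and> x i \<le> b)\<bar> \<le> 1"
proof -
  let ?S = "{i\<in>{..<n}. a \<le> x i \<and> x i \<le> b}"
  have "(\<Sum>i<n. (-1::real) ^ i * of_bool (a \<le> x i \<and> x i \<le> b))
      = (\<Sum>i<n. if a \<le> x i \<and> x i \<le> b then (-1) ^ i else 0)"
    by (intro sum.cong) auto
  also have "\<dots> = (\<Sum>i\<in>?S. (-1) ^ i)"
    by (rule sum.inter_filter[symmetric]) simp
  also have "\<bar>\<dots>\<bar> \<le> 1"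
    using assms by (intro abs_sum_alternating_order_convex) (auto dest: monoD intro: order_trans)
  finally show ?thesis .
qed

definition grid_point :: "real \<Rightarrow> nat \<Rightarrow> real" where
  "grid_point h i = 1/4 + (real i + 1/2) * h"

definition grid_label :: "real \<Rightarrow> nat \<Rightarrow> real" where
  "grid_label h i = grid_point h i + (-1) ^ i / 4"

definition grid_swap :: "real \<Rightarrow> nat \<Rightarrow> real \<Rightarrow> real" where
  "grid_swap h n a = (let k = \<lfloor>(a - 1/4) / h\<rfloor> in
     if 0 \<le> k \<and> k < int n then grid_label h (nat k) else a)"

lemma mono_grid_point: "0 \<le> h \<Longrightarrow> mono (grid_point h)"
  by (auto simp: mono_def grid_point_def intro: mult_right_mono)

lemma grid_point_eq_iff: "0 < h \<Longrightarrow> grid_point h i = grid_point h j \<longleftrightarrow> i = j"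
  by (simp add: grid_point_def)

lemma grid_point_bounds:
  assumes "0 \<le> h" "h * n \<le> 1/2" "i < n"
  shows "1/4 \<le> grid_point h i" "grid_point h i \<le> 3/4"
proof -
  have "(real i + 1/2) * h \<le> real n * h"
    using assms by (intro mult_right_mono) auto
  then show "grid_point h i \<le> 3/4"
    using assms(2) by (simp add: grid_point_def mult.commute)
  show "1/4 \<le> grid_point h i"
    using assms(1) by (simp add: grid_point_def)
qed

lemma grid_point_label_in_unit:
  assumes "0 \<le> h" "h * n \<le> 1/2" "i < n"
  shows "grid_point h i \<in> {0..1}" "grid_label h i \<in> {0..1}"
  using grid_point_bounds[OF assms] by (cases "even i"; simp add: grid_label_def)+

lemma grid_swap_bounds:
  assumes "0 \<le> h" "h * n \<le> 1/2" "a \<in> {0..1}"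
  shows "grid_swap h n a \<in> {0..1}"
proof -
  have "grid_label h (nat k) \<in> {0..1}" if "0 \<le> k" "k < int n" for k
    using that by (intro grid_point_label_in_unit[OF assms(1,2)]) auto
  then show ?thesis
    using assms(3) by (simp add: grid_swap_def Let_def)
qed

lemma borel_measurable_grid_swap: "grid_swap h n \<in> borel_measurable borel"
  unfolding grid_swap_def Let_def by measurable

lemma grid_swap_cases:
  assumes h: "0 < h" and i: "i < n"
  shows "grid_swap h n a = grid_label h i \<or> h / 2 \<le> \<bar>a - grid_point h i\<bar>"
proof (cases "\<lfloor>(a - 1/4) / h\<rfloor> = int i")
  case True
  then show ?thesis using i by (simp add: grid_swap_def)
next
  case False
  define u where "u = (a - 1/4) / h"
  have "a - grid_point h i = h * (u - (real i + 1/2))"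
    using h by (simp add: u_def grid_point_def field_simps)
  moreover have "u < real i \<or> real i + 1 \<le> u"
    using False by (auto simp: u_def floor_eq_iff)
  then have "1/2 \<le> \<bar>u - (real i + 1/2)\<bar>"
    by auto
  ultimately show ?thesis
    using h by (simp add: abs_mult)
qed

lemma grid_swap_below:
  assumes "0 < h" "a < 1/4"
  shows "grid_swap h n a = a"
proof -
  have "(a - 1/4) / h < 0"
    using assms by (intro divide_neg_pos) auto
  then show ?thesis
    by (simp add: grid_swap_def Let_def)
qed

lemma square_swap_gain_ge:
  fixes a s x \<mu> h :: real
  assumes label: "\<bar>\<mu> - x\<bar> = 1/4" and h: "0 < h" "h \<le> 1"
    and range: "s \<in> {0..1}" "\<mu> \<in> {0..1}"
    and swap: "s = \<mu> \<or> h / 2 \<le> \<bar>a - x\<bar>"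
  shows "1/32 - 5 / h\<^sup>2 * (a - x)\<^sup>2 \<le> (a - \<mu>)\<^sup>2 - (s - \<mu>)\<^sup>2"
  using swap
proof
  assume "s = \<mu>"
  have "1 \<le> 5 / h\<^sup>2"
    using h power_le_one[of h 2] by (simp add: field_simps)
  then have "1 * (a - x)\<^sup>2 \<le> 5 / h\<^sup>2 * (a - x)\<^sup>2"
    by (rule mult_right_mono) simp
  moreover have "(a - \<mu>)\<^sup>2 + (a - x)\<^sup>2 = 2 * (a - x - (\<mu> - x) / 2)\<^sup>2 + (\<mu> - x)\<^sup>2 / 2"
    by (simp add: power2_eq_square field_simps)
  moreover have "(\<mu> - x)\<^sup>2 = 1/16"
    using power2_abs[of "\<mu> - x"] unfolding label by (simp add: power2_eq_square)
  moreover have "(s - \<mu>)\<^sup>2 = 0"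
    using \<open>s = \<mu>\<close> by simp
  ultimately show ?thesis
    using zero_le_power2[of "a - x - (\<mu> - x) / 2"] by linarith
next
  assume far: "h / 2 \<le> \<bar>a - x\<bar>"
  have "(h / 2)\<^sup>2 \<le> (a - x)\<^sup>2"
    using far h by (simp add: abs_le_square_iff[symmetric])
  then have "5 / h\<^sup>2 * (h / 2)\<^sup>2 \<le> 5 / h\<^sup>2 * (a - x)\<^sup>2"
    by (rule mult_left_mono) simp
  moreover have "5 / h\<^sup>2 * (h / 2)\<^sup>2 = 5/4"
    using h by (simp add: power2_eq_square)
  ultimately have "5/4 \<le> 5 / h\<^sup>2 * (a - x)\<^sup>2"
    by simp
  moreover have "(s - \<mu>)\<^sup>2 \<le> 1"
    using range by (auto simp: abs_square_le_1)
  ultimately show ?thesis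
    using zero_le_power2[of "a - \<mu>"] by linarith
qed

lemma grid_swap_loss_at_zero:
  assumes "0 < h" "h * n \<le> 1/2" "a \<in> {0..1}"
  shows "- 16 * a\<^sup>2 \<le> a\<^sup>2 - (grid_swap h n a)\<^sup>2"
proof (cases "a < 1/4")
  case True
  then show ?thesis using assms(1) by (simp add: grid_swap_below)
next
  case False
  then have "1 \<le> (4 * a)\<^sup>2"
    by (intro one_le_power) simp
  moreover have "(grid_swap h n a)\<^sup>2 \<le> 1"
    using grid_swap_bounds[of h n a] assms by (simp add: abs_square_le_1)
  ultimately show ?thesis
    by (simp add: power_mult_distrib)
qed

lemma cutoff_err_grid_mixture:
  assumes n: "0 < n" and w: "w \<in> {0..1}" and h: "0 < h" "h * n \<le> 1/2"
  shows "cutoff_err (forecast_mixture w n (grid_point h) (grid_label h) (0, False)) = w / (4 * real n)"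
proof -
  let ?D = "forecast_mixture w n (grid_point h) (grid_label h) (0, False)"
  let ?window = "\<lambda>a b. \<Sum>i<n. (-1::real) ^ i * of_bool (a \<le> grid_point h i \<and> grid_point h i \<le> b)"
  have calibration: "measure_pmf.expectation ?D (\<lambda>(x, y). (of_bool y - x) * of_bool (a \<le> x \<and> x \<le> b))
      = w / (4 * real n) * ?window a b" for a b
    using n h grid_point_label_in_unit(2)[of h n]
    by (subst calibration_forecast_mixture[OF n w]) (simp_all add: grid_label_def sum_divide_distrib[symmetric])
  have "\<bar>w / (4 * real n) * ?window a b\<bar> = w / (4 * real n) * \<bar>?window a b\<bar>" for a b
    using w by (simp add: abs_mult)
  also have "\<dots> a b \<le> w / (4 * real n)" for a b
    using h w by (intro mult_left_le abs_sum_alternating_window mono_grid_point) auto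
  finally have window_le: "\<bar>w / (4 * real n) * ?window a b\<bar> \<le> w / (4 * real n)" for a b .
  have "?window (grid_point h 0) (grid_point h 0) = (\<Sum>i<n. if i = 0 then 1 else 0)"
    using grid_point_eq_iff[OF h(1)] by (intro sum.cong) (auto simp: antisym_conv)
  then have window_attained: "?window (grid_point h 0) (grid_point h 0) = 1"
    using n by simp
  show ?thesis
  proof (rule cutoff_err_eqI[where a\<^sub>0 = "grid_point h 0" and b\<^sub>0 = "grid_point h 0"])
    show "\<bar>measure_pmf.expectation ?D (\<lambda>(x, y). (of_bool y - x) * of_bool (a \<le> x \<and> x \<le> b))\<bar>
        \<le> w / (4 * real n)" for a b
      unfolding calibration by (rule window_le)
    show "\<bar>measure_pmf.expectation ?D (\<lambda>(x, y). (of_bool y - x)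
        * of_bool (grid_point h 0 \<le> x \<and> x \<le> grid_point h 0))\<bar> = w / (4 * real n)"
      unfolding calibration window_attained using w by simp
  qed (use grid_point_label_in_unit(1)[OF _ h(2) n] h in auto)
qed

lemma swap_gain_grid_point_ge:
  assumes r: "valid_response r" and h: "0 < h" "h \<le> 1" "h * n \<le> 1/2" and i: "i < n"
  shows "1/32 - 5 / h\<^sup>2 * response_spread r (grid_point h i)
    \<le> swap_gain r (grid_swap h n) (grid_point h i) (grid_label h i)"
proof (rule swap_gain_lower_bound[OF r])
  show "grid_point h i \<in> {0..1}" "grid_label h i \<in> {0..1}"
    using grid_point_label_in_unit[OF _ h(3) i] h by auto
  show "grid_swap h n \<in> borel_measurable borel" "\<And>a. a \<in> {0..1} \<Longrightarrow> grid_swap h n a \<in> {0..1}"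
    using grid_swap_bounds[of h n] h by (auto intro: borel_measurable_grid_swap)
  then show "1/32 - 5 / h\<^sup>2 * (a - grid_point h i)\<^sup>2
      \<le> (a - grid_label h i)\<^sup>2 - (grid_swap h n a - grid_label h i)\<^sup>2" if "a \<in> {0..1}" for a
    using that h grid_swap_cases[OF h(1) i] \<open>grid_label h i \<in> {0..1}\<close>
    by (intro square_swap_gain_ge) (auto simp: grid_label_def)
qed

lemma swap_regret_grid_mixture_ge:
  assumes r: "valid_response r" and n: "0 < n" and w: "w \<in> {0..1}"
    and h: "0 < h" "h \<le> 1" "h * n \<le> 1/2"
    and spread: "\<And>p. p \<in> {0..1} \<Longrightarrow> response_spread r p \<le> s"
  shows "w * (1/32 - 5 / h\<^sup>2 * s) - 16 * (1 - w) * s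
    \<le> swap_regret sqU r (forecast_mixture w n (grid_point h) (grid_label h) (0, False))"
proof -
  let ?\<sigma> = "grid_swap h n"
  let ?c = "1/32 - 5 / h\<^sup>2 * s"
  have point: "grid_point h i \<in> {0..1}" and label: "grid_label h i \<in> {0..1}" if "i < n" for i
    using grid_point_label_in_unit[OF _ h(3) that] h by auto
  have \<sigma>: "?\<sigma> \<in> borel_measurable borel" "\<And>a. a \<in> {0..1} \<Longrightarrow> ?\<sigma> a \<in> {0..1}"
    using grid_swap_bounds[of h n] h by (auto intro: borel_measurable_grid_swap)
  have "5 / h\<^sup>2 * response_spread r (grid_point h i) \<le> 5 / h\<^sup>2 * s" if "i < n" for i
    using spread[OF point[OF that]] by (intro mult_left_mono) auto
  then have "?c \<le> swap_gain r ?\<sigma> (grid_point h i) (grid_label h i)" if "i < n" for i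
    using swap_gain_grid_point_ge[OF r h that] that by fastforce
  then have "real n * ?c \<le> (\<Sum>i<n. swap_gain r ?\<sigma> (grid_point h i) (grid_label h i))"
    using sum_mono[of "{..<n}" "\<lambda>_. ?c"] by simp
  then have "w * (real n * ?c) / n \<le> w * (\<Sum>i<n. swap_gain r ?\<sigma> (grid_point h i) (grid_label h i)) / n"
    using w by (intro divide_right_mono mult_left_mono) auto
  moreover have "w * (real n * ?c) / n = w * ?c"
    using n by simp
  moreover have "0 - 16 * response_spread r 0 \<le> swap_gain r ?\<sigma> 0 0"
    using grid_swap_loss_at_zero[OF h(1,3)] by (intro swap_gain_lower_bound[OF r _ \<sigma>]) auto
  then have "(1 - w) * (- 16 * s) \<le> (1 - w) * swap_gain r ?\<sigma> 0 0"
    using w spread[of 0] by (intro mult_left_mono) auto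
  moreover have "w * (\<Sum>i<n. swap_gain r ?\<sigma> (grid_point h i) (grid_label h i)) / n
      + (1 - w) * swap_gain r ?\<sigma> 0 0
    \<le> swap_regret sqU r (forecast_mixture w n (grid_point h) (grid_label h) (0, False))"
    using swap_regret_forecast_mixture_ge[of r n w "grid_point h" "grid_label h" "(0, False)" ?\<sigma>]
      r n w point label \<sigma> by simp
  ultimately show ?thesis
    by linarith
qed

lemma exists_dist_swap_regret_ge_grid:
  assumes r: "valid_response r" and n: "0 < n" and w: "w \<in> {0..1}"
    and spread: "\<And>p. p \<in> {0..1} \<Longrightarrow> response_spread r p \<le> s"
  shows "\<exists>D. valid_dist D \<and> cutoff_err D = w / (4 * real n) \<and>
    w * (1/32 - 20 * (real n)\<^sup>2 * s) - 16 * (1 - w) * s \<le> swap_regret sqU r D"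
proof (intro exI conjI)
  define h where "h = 1 / (2 * real n)"
  have h: "0 < h" "h \<le> 1" "h * n \<le> 1/2" and "5 / h\<^sup>2 = 20 * (real n)\<^sup>2"
    using n by (auto simp: h_def power2_eq_square)
  then show "w * (1/32 - 20 * (real n)\<^sup>2 * s) - 16 * (1 - w) * s
      \<le> swap_regret sqU r (forecast_mixture w n (grid_point h) (grid_label h) (0, False))"
    using swap_regret_grid_mixture_ge[OF r n w h spread] by simp
  show "cutoff_err (forecast_mixture w n (grid_point h) (grid_label h) (0, False)) = w / (4 * real n)"
    using cutoff_err_grid_mixture[OF n w h(1,3)] .
  show "valid_dist (forecast_mixture w n (grid_point h) (grid_label h) (0, False))"
    using n grid_point_label_in_unit(1)[OF _ h(3)] h by (intro valid_dist_forecast_mixture) auto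
qed

lemma exists_dist_cube_cutoff_spread_response:
  assumes r: "valid_response r" and t: "0 < t" "t \<le> 1/40000"
    and p: "p \<in> {0..1}" and spread: "t\<^sup>2 / 10000 \<le> response_spread r p"
  shows "\<exists>D. valid_dist D \<and> cutoff_err D = t ^ 3 \<and> t\<^sup>2 / 40000 \<le> swap_regret sqU r D"
proof -
  have cube: "t ^ 3 \<le> t\<^sup>2 / 40000"
    using t mult_right_mono[OF t(2), of "t\<^sup>2"] by (simp add: power2_eq_square power3_eq_cube)
  moreover have "t\<^sup>2 \<le> 1"
    using t by (simp add: power_le_one)
  ultimately have half: "1/2 \<le> 1 - t ^ 3"
    by simp
  obtain D where D: "valid_dist D" "cutoff_err D = t ^ 3"
    "(1 - t ^ 3) * response_spread r p - t ^ 3 \<le> swap_regret sqU r D"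
    using exists_dist_swap_regret_ge_spread[OF r _ _ p, of "t ^ 3"] t half by auto
  have "1/2 * (t\<^sup>2 / 10000) \<le> (1 - t ^ 3) * response_spread r p"
    using half spread by (intro mult_mono) auto
  then have "t\<^sup>2 / 40000 \<le> swap_regret sqU r D"
    using D(3) cube by linarith
  then show ?thesis
    using D(1,2) by blast
qed

lemma exists_dist_cube_cutoff_concentrated_response:
  assumes r: "valid_response r" and t: "0 < t" "t \<le> 1/1000"
    and spread: "\<And>p. p \<in> {0..1} \<Longrightarrow> response_spread r p \<le> t\<^sup>2 / 10000"
  shows "\<exists>D. valid_dist D \<and> cutoff_err D = t ^ 3 \<and> t\<^sup>2 / 40 \<le> swap_regret sqU r D"
proof -
  define n where "n = nat \<lfloor>1 / t\<rfloor>"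
  have "real n = \<lfloor>1 / t\<rfloor>"
    using t by (simp add: n_def)
  then have "real n \<le> 1 / t" "1 / t < real n + 1"
    by (simp_all add: of_int_floor_le real_of_int_floor_add_one_gt)
  then have tn: "t * n \<le> 1" "1 \<le> t * n + t"
    using t by (auto simp: field_simps)
  have "1000 \<le> 1 / t"
    using t by (simp add: field_simps)
  then have n: "0 < n"
    using \<open>1 / t < real n + 1\<close> by (simp add: of_nat_less_iff[symmetric])
  define w where "w = 4 * t ^ 3 * n"
  have w: "w = 4 * t\<^sup>2 * (t * n)"
    by (simp add: w_def power2_eq_square power3_eq_cube)
  have t2: "t\<^sup>2 \<le> 1/1000000"
    using power_mono[OF t(2), of 2] t by (simp add: power2_eq_square)
  have "w \<le> 4 * t\<^sup>2"
    unfolding w using tn by (intro mult_left_le) auto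
  moreover have "4 * t\<^sup>2 * (1/2) \<le> w"
    unfolding w using tn t by (intro mult_left_mono) auto
  ultimately have w01: "w \<in> {0..1}" and w_ge: "2 * t\<^sup>2 \<le> w"
    using t2 by auto
  obtain D where D: "valid_dist D" "cutoff_err D = w / (4 * real n)"
    "w * (1/32 - 20 * (real n)\<^sup>2 * (t\<^sup>2 / 10000)) - 16 * (1 - w) * (t\<^sup>2 / 10000) \<le> swap_regret sqU r D"
    using exists_dist_swap_regret_ge_grid[OF r n w01 spread] by blast
  have cutoff: "w / (4 * real n) = t ^ 3"
    using n by (simp add: w_def)
  have "(real n)\<^sup>2 * t\<^sup>2 \<le> 1"
    using tn t by (simp add: power_mult_distrib[symmetric] power_le_one mult.commute)
  then have "w * (1/40) \<le> w * (1/32 - 20 * (real n)\<^sup>2 * (t\<^sup>2 / 10000))"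
    using w01 by (intro mult_left_mono) (auto simp: mult.commute)
  moreover have "16 * (1 - w) * (t\<^sup>2 / 10000) \<le> 16 * (t\<^sup>2 / 10000)"
    using w01 by (intro mult_right_mono) auto
  ultimately have "t\<^sup>2 / 40 \<le> swap_regret sqU r D"
    using D(3) w_ge zero_le_power2[of t] by linarith
  then show ?thesis
    using D(1,2) cutoff by auto
qed

lemma exists_dist_cube_cutoff_square_regret:
  assumes r: "valid_response r" and t: "0 < t" "t \<le> 1/40000"
  shows "\<exists>D. valid_dist D \<and> cutoff_err D = t ^ 3 \<and> t\<^sup>2 / 40000 \<le> swap_regret sqU r D"
proof (cases "\<exists>p\<in>{0..1}. t\<^sup>2 / 10000 \<le> response_spread r p")
  case True
  then show ?thesis
    using exists_dist_cube_cutoff_spread_response[OF r t] by blast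
next
  case False
  then have "\<And>p. p \<in> {0..1} \<Longrightarrow> response_spread r p \<le> t\<^sup>2 / 10000"
    by force
  then obtain D where "valid_dist D" "cutoff_err D = t ^ 3" "t\<^sup>2 / 40 \<le> swap_regret sqU r D"
    using exists_dist_cube_cutoff_concentrated_response[OF r t(1)] t(2) by auto
  moreover have "t\<^sup>2 / 40000 \<le> t\<^sup>2 / 40"
    by simp
  ultimately show ?thesis
    by (meson order_trans)
qed

theorem theoremB1:
  shows "\<exists>c::real. c > 0 \<and>
    (\<forall>\<epsilon>::real. 0 < \<epsilon> \<and> \<epsilon> < 10 powr (-100) \<longrightarrow>
      (\<forall>r. valid_response r \<longrightarrow>
        (\<exists>D. valid_dist D \<and> cutoff_err D = \<epsilon> \<and>
             swap_regret sqU r D \<ge> c * \<epsilon> powr (2/3))))"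
proof (intro exI[of _ "1/40000"] conjI allI impI)
  fix \<epsilon> :: real and r
  assume "0 < \<epsilon> \<and> \<epsilon> < 10 powr (-100)" and r: "valid_response r"
  then have \<epsilon>: "0 < \<epsilon>" "\<epsilon> < 10 powr (-100)"
    by blast+
  define t where "t = \<epsilon> powr (1/3)"
  have t: "0 < t"
    using \<epsilon>(1) by (simp add: t_def)
  have t_power: "t ^ k = \<epsilon> powr (k / 3)" for k :: nat
    using powr_realpow[OF t, of k] by (simp add: t_def powr_powr)
  have t3: "t ^ 3 = \<epsilon>" and t2: "t\<^sup>2 = \<epsilon> powr (2/3)"
    using t_power[of 3] t_power[of 2] \<epsilon>(1) by simp_all
  have "(10::real) powr (-100) = 1 / 10 ^ 100"
    by (simp add: powr_minus_divide powr_realpow[symmetric])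
  also have "(1::real) / 10 ^ 100 \<le> (1/40000) ^ 3"
    by (simp add: power_divide divide_le_eq le_divide_eq)
  finally have "t ^ 3 < (1/40000) ^ 3"
    unfolding t3 by (rule less_le_trans[OF \<epsilon>(2)])
  then have "t < 1/40000"
    by (rule power_less_imp_less_base) simp
  then show "\<exists>D. valid_dist D \<and> cutoff_err D = \<epsilon> \<and> 1/40000 * \<epsilon> powr (2/3) \<le> swap_regret sqU r D"
    unfolding t2[symmetric] using exists_dist_cube_cutoff_square_regret[OF r t] t3 by auto
qed simp

end
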